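(* Let $f_\mu,f_\nu$ be nonnegative and continuous on $[-p,0]$ and $[-q,0]$ (and supported there). Define $F_\mu,F_\nu:\mathbb R^2\to\mathbb R$ by $F_\mu(t,s)=\int_{[-p\vee(s-t),\,s\wedge 0]}f_\mu(u)\,du$ and $F_\nu(t,s)=\int_{[-q\vee(s-t),\,s\wedge 0]}f_\nu(u)\,du$ (interpreted as $0$ when the interval is empty). Let $X$ be the unique strong solution of the CDGARCH variance equation and define $\Xi(X)_t:=\int_{[-p,t]}F_\mu(t,s)X_s\,ds+\int_{(-q,t]}F_\nu(t,s)X_{s-}\,dS_s$ for $t\ge 0$. Then: (a) $F_\mu$ and $F_\nu$ are nonnegative Lipschitz continuous functions on $\mathbb R^2$; (b) the process $(\Xi(X)_t)_{t\ge0}$ has (almost surely) locally Lipschitz continuous sample paths, with derivative $\xi(X)_t:=\frac{d}{dt}\Xi(X)_t=\int_{-p}^0 f_\mu(u)X_{t+u}\,du+\int_{-q+}^0 f_\nu(u)X_{t+u-}\,dS_{t+u}$ for Lebesgue almost every $t\ge 0$.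
   Context: Let $p,q\ge 0$, $r:=p\vee q>0$, and $(\Omega,\mathcal F,\mathbb F=(\mathcal F_t)_{t\ge -r},\mathbb P)$ a filtered probability space with the usual conditions, supporting a càdlàg adapted centered square-integrable Lévy process $(L_t)_{t\ge -r}$, $L_{-r}=0$, with independent stationary increments relative to $\mathbb F$; $S=[L,L]$ is its quadratic variation, $S_t=\sigma_L^2(t+r)+\sum_{-r<s\le t}(\Delta L_s)^2$. Assume $\mathbb E[L_1^4]<\infty$. Parameters: $\eta>0$, $c_\mu,c_\nu>0$, $\mu(E)=\int_{E\cap[-p,0]}f_\mu-c_\mu\delta_0(E)$, $\nu(E)=\int_{E\cap[-q,0]}f_\nu+c_\nu\delta_0(E)$. The initial process $\Phi$ is càdlàg on $[-r,0]$, adapted to the natural filtration of $L$, with $\mathbb E[\sup_{s\in[-r,0]}|\Phi_s|^2]<\infty$; extend $\Phi_t=\Phi_0$ for $t>0$ and let $\theta_t=\Phi_t+\eta t\mathbf 1_{[0,\infty)}(t)$. The CDGARCH variance equation is $X_t=\theta_t+\int_{-p}^0\int_u^{t+u}X_s\,ds\,\mu(du)+\int_{-q}^0\int_{u+}^{t+u}X_{s-}\,dS_s\,\nu(du)$, $t\ge0$, $X=\Phi$ on $[-r,0]$; its unique strong solution is the unique adapted càdlàg process $X$ on $[-r,\infty)$ with $\mathbb E[\sup_{s\in[-r,t]}|X_s|^2]<\infty$ for all $t$ satisfying it. *)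

theory Defs
  imports "HOL-Probability.Probability"
begin

definition left_lim :: "(real \<Rightarrow> real) \<Rightarrow> real \<Rightarrow> real" where
  "left_lim g t = Lim (at_left t) g"

definition cadlag_from :: "real \<Rightarrow> (real \<Rightarrow> real) \<Rightarrow> bool" where
  "cadlag_from a g \<longleftrightarrow>
     (\<forall>t\<ge>a. (g \<longlongrightarrow> g t) (at_right t)) \<and>
     (\<forall>t>a. \<exists>l. (g \<longlongrightarrow> l) (at_left t))"

definition cadlag_on_interval :: "real \<Rightarrow> real \<Rightarrow> (real \<Rightarrow> real) \<Rightarrow> bool" where
  "cadlag_on_interval a b g \<longleftrightarrow>
     (\<forall>t\<in>{a..<b}. (g \<longlongrightarrow> g t) (at_right t)) \<and>
     (\<forall>t\<in>{a<..b}. \<exists>l. (g \<longlongrightarrow> l) (at_left t))"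

definition LS_measure :: "real \<Rightarrow> (real \<Rightarrow> real) \<Rightarrow> real measure" where
  "LS_measure a g = interval_measure (\<lambda>\<tau>. g (max \<tau> a))"

definition filtration_usual :: "'a measure \<Rightarrow> real \<Rightarrow> (real \<Rightarrow> 'a measure) \<Rightarrow> bool" where
  "filtration_usual M r F \<longleftrightarrow>
     (\<forall>t\<ge>-r. space (F t) = space M \<and> sets (F t) \<subseteq> sets M) \<and>
     (\<forall>s t. -r \<le> s \<and> s \<le> t \<longrightarrow> sets (F s) \<subseteq> sets (F t)) \<and>
     (\<forall>N\<in>null_sets M. \<forall>B. B \<subseteq> N \<longrightarrow> B \<in> sets M) \<and>
     (\<forall>N\<in>null_sets M. N \<in> sets (F (-r))) \<and>
     (\<forall>t\<ge>-r. sets (F t) = (\<Inter>s\<in>{t<..}. sets (F s)))"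

definition adapted_from :: "real \<Rightarrow> (real \<Rightarrow> 'a measure) \<Rightarrow> (real \<Rightarrow> 'a \<Rightarrow> real) \<Rightarrow> bool" where
  "adapted_from r F X \<longleftrightarrow> (\<forall>t\<ge>-r. X t \<in> borel_measurable (F t))"

definition levy_process :: "'a measure \<Rightarrow> real \<Rightarrow> (real \<Rightarrow> 'a measure) \<Rightarrow> (real \<Rightarrow> 'a \<Rightarrow> real) \<Rightarrow> bool" where
  "levy_process M r F L \<longleftrightarrow>
     adapted_from r F L \<and>
     (\<forall>\<omega>\<in>space M. cadlag_from (-r) (\<lambda>t. L t \<omega>)) \<and>
     (\<forall>\<omega>\<in>space M. L (-r) \<omega> = 0) \<and>
     (\<forall>t\<ge>-r. integrable M (L t) \<and> (\<integral>\<omega>. L t \<omega> \<partial>M) = 0 \<and> integrable M (\<lambda>\<omega>. (L t \<omega>)\<^sup>2)) \<and>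
     (\<forall>s t. -r \<le> s \<and> s \<le> t \<longrightarrow>
        (\<forall>A\<in>sets (F s). \<forall>B\<in>sets borel.
           measure M (A \<inter> {\<omega>\<in>space M. L t \<omega> - L s \<omega> \<in> B})
             = measure M A * measure M {\<omega>\<in>space M. L t \<omega> - L s \<omega> \<in> B})) \<and>
     (\<forall>s t s' t'. -r \<le> s \<and> s \<le> t \<and> -r \<le> s' \<and> s' \<le> t' \<and> t - s = t' - s' \<longrightarrow>
        distr M borel (\<lambda>\<omega>. L t \<omega> - L s \<omega>) = distr M borel (\<lambda>\<omega>. L t' \<omega> - L s' \<omega>))"

definition dyadic_qv_sum :: "real \<Rightarrow> (real \<Rightarrow> 'a \<Rightarrow> real) \<Rightarrow> nat \<Rightarrow> real \<Rightarrow> 'a \<Rightarrow> real" where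
  "dyadic_qv_sum r L n t \<omega> =
     (\<Sum>k<2^n. (L (-r + real (Suc k) * (t + r) / 2^n) \<omega> - L (-r + real k * (t + r) / 2^n) \<omega>)\<^sup>2)"

definition quadratic_variation :: "'a measure \<Rightarrow> real \<Rightarrow> (real \<Rightarrow> 'a \<Rightarrow> real) \<Rightarrow> (real \<Rightarrow> 'a \<Rightarrow> real) \<Rightarrow> bool" where
  "quadratic_variation M r L S \<longleftrightarrow>
     (\<forall>t\<ge>-r. S t \<in> borel_measurable M) \<and>
     (\<forall>\<omega>\<in>space M. cadlag_from (-r) (\<lambda>t. S t \<omega>)) \<and>
     (\<forall>t\<ge>-r. \<forall>\<epsilon>>0.
        (\<lambda>n. measure M {\<omega>\<in>space M. \<bar>dyadic_qv_sum r L n t \<omega> - S t \<omega>\<bar> > \<epsilon>}) \<longlonglongrightarrow> 0)"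

definition natural_filtration :: "'a measure \<Rightarrow> real \<Rightarrow> (real \<Rightarrow> 'a \<Rightarrow> real) \<Rightarrow> real \<Rightarrow> 'a measure" where
  "natural_filtration M r L t =
     sigma (space M) {L s -` B \<inter> space M | s B. -r \<le> s \<and> s \<le> t \<and> B \<in> sets borel}"

definition initial_process :: "'a measure \<Rightarrow> real \<Rightarrow> (real \<Rightarrow> 'a \<Rightarrow> real) \<Rightarrow> (real \<Rightarrow> 'a \<Rightarrow> real) \<Rightarrow> bool" where
  "initial_process M r L \<Phi> \<longleftrightarrow>
     (\<forall>\<omega>\<in>space M. cadlag_on_interval (-r) 0 (\<lambda>t. \<Phi> t \<omega>)) \<and>
     (\<forall>t\<in>{-r..0}. \<Phi> t \<in> borel_measurable (natural_filtration M r L t)) \<and>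
     (\<integral>\<^sup>+\<omega>. (SUP s\<in>{-r..0}. ennreal ((\<Phi> s \<omega>)\<^sup>2)) \<partial>M) < \<infinity>"

(* right-hand side of the CDGARCH variance equation at time t >= 0, with the measures
   mu = f_mu on [-p,0] minus c_mu delta_0, nu = f_nu on [-q,0] plus c_nu delta_0 written out,
   theta_t = Phi_0 + eta t, and the dS-integrals as pathwise Lebesgue--Stieltjes integrals *)
definition cdgarch_rhs ::
  "real \<Rightarrow> real \<Rightarrow> real \<Rightarrow> real \<Rightarrow> real \<Rightarrow> real \<Rightarrow> (real \<Rightarrow> real) \<Rightarrow> (real \<Rightarrow> real)
   \<Rightarrow> (real \<Rightarrow> 'a \<Rightarrow> real) \<Rightarrow> (real \<Rightarrow> 'a \<Rightarrow> real) \<Rightarrow> (real \<Rightarrow> 'a \<Rightarrow> real) \<Rightarrow> real \<Rightarrow> 'a \<Rightarrow> real" where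
  "cdgarch_rhs p q r \<eta> c\<mu> c\<nu> f\<mu> f\<nu> S \<Phi> X t \<omega> =
     \<Phi> 0 \<omega> + \<eta> * t
     + (LINT u:{-p..0}|lborel. f\<mu> u * (LINT s:{u..t+u}|lborel. X s \<omega>))
     - c\<mu> * (LINT s:{0..t}|lborel. X s \<omega>)
     + (LINT u:{-q..0}|lborel. f\<nu> u *
           (LINT s:{u<..t+u}|LS_measure (-r) (\<lambda>\<tau>. S \<tau> \<omega>). left_lim (\<lambda>\<tau>. X \<tau> \<omega>) s))
     + c\<nu> * (LINT s:{0<..t}|LS_measure (-r) (\<lambda>\<tau>. S \<tau> \<omega>). left_lim (\<lambda>\<tau>. X \<tau> \<omega>) s)"

definition cdgarch_strong_solution ::
  "'a measure \<Rightarrow> (real \<Rightarrow> 'a measure) \<Rightarrow> real \<Rightarrow> real \<Rightarrow> real \<Rightarrow> real \<Rightarrow> real \<Rightarrow> real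
   \<Rightarrow> (real \<Rightarrow> real) \<Rightarrow> (real \<Rightarrow> real) \<Rightarrow> (real \<Rightarrow> 'a \<Rightarrow> real) \<Rightarrow> (real \<Rightarrow> 'a \<Rightarrow> real)
   \<Rightarrow> (real \<Rightarrow> 'a \<Rightarrow> real) \<Rightarrow> bool" where
  "cdgarch_strong_solution M F p q r \<eta> c\<mu> c\<nu> f\<mu> f\<nu> S \<Phi> X \<longleftrightarrow>
     adapted_from r F X \<and>
     (\<forall>\<omega>\<in>space M. cadlag_from (-r) (\<lambda>t. X t \<omega>)) \<and>
     (\<forall>t\<ge>-r. (\<integral>\<^sup>+\<omega>. (SUP s\<in>{-r..t}. ennreal ((X s \<omega>)\<^sup>2)) \<partial>M) < \<infinity>) \<and>
     (\<forall>\<omega>\<in>space M. \<forall>t\<in>{-r..0}. X t \<omega> = \<Phi> t \<omega>) \<and>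
     (AE \<omega> in M. \<forall>t\<ge>0. X t \<omega> = cdgarch_rhs p q r \<eta> c\<mu> c\<nu> f\<mu> f\<nu> S \<Phi> X t \<omega>)"

definition Fker :: "real \<Rightarrow> (real \<Rightarrow> real) \<Rightarrow> real \<Rightarrow> real \<Rightarrow> real" where
  "Fker p f t s = (LINT u:{max (-p) (s - t)..min s 0}|lborel. f u)"

definition Xi ::
  "real \<Rightarrow> real \<Rightarrow> real \<Rightarrow> (real \<Rightarrow> real) \<Rightarrow> (real \<Rightarrow> real) \<Rightarrow> (real \<Rightarrow> 'a \<Rightarrow> real)
   \<Rightarrow> (real \<Rightarrow> 'a \<Rightarrow> real) \<Rightarrow> real \<Rightarrow> 'a \<Rightarrow> real" where
  "Xi p q r f\<mu> f\<nu> S X t \<omega> =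
     (LINT s:{-p..t}|lborel. Fker p f\<mu> t s * X s \<omega>)
     + (LINT s:{-q<..t}|LS_measure (-r) (\<lambda>\<tau>. S \<tau> \<omega>). Fker q f\<nu> t s * left_lim (\<lambda>\<tau>. X \<tau> \<omega>) s)"

(* xi(X)_t; the integrator dS_{t+u} is the Lebesgue--Stieltjes measure of u |-> S_{t+u} *)
definition xi ::
  "real \<Rightarrow> real \<Rightarrow> real \<Rightarrow> (real \<Rightarrow> real) \<Rightarrow> (real \<Rightarrow> real) \<Rightarrow> (real \<Rightarrow> 'a \<Rightarrow> real)
   \<Rightarrow> (real \<Rightarrow> 'a \<Rightarrow> real) \<Rightarrow> real \<Rightarrow> 'a \<Rightarrow> real" where
  "xi p q r f\<mu> f\<nu> S X t \<omega> =
     (LINT u:{-p..0}|lborel. f\<mu> u * X (t + u) \<omega>)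
     + (LINT u:{-q<..0}|LS_measure (-r - t) (\<lambda>u. S (t + u) \<omega>). f\<nu> u * left_lim (\<lambda>\<tau>. X \<tau> \<omega>) (t + u))"

end

theory Submission
  imports Defs
begin

text \<open>Let \<open>Q\<close> be the primitive of a kernel density \<open>f\<close> (constant outside \<open>[-q, 0]\<close>).
  Then \<open>F(t, s) = max 0 (Q s - Q (s - t))\<close>, which is Lipschitz because \<open>Q\<close> is. For
  \<open>0 \<le> t \<le> T\<close> the kernel vanishes for \<open>s > t\<close>, so \<open>\<Xi>(X)\<^sub>t\<close> is an integral over the
  fixed domains \<open>[-p, T]\<close> and \<open>(-q, T]\<close> of \<open>(Q s - Q (s - t)) g(s)\<close>, with \<open>g\<close> a bounded
  path (\<open>X\<close> or its left limits) and a measure (\<open>ds\<close> or \<open>dS\<close>) independent of \<open>t\<close>.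
  Lipschitz continuity in \<open>t\<close> is inherited from \<open>Q\<close>. Since \<open>Q' = f\<close> off \<open>{-q, 0}\<close>, dominated
  convergence differentiates under the integral at every \<open>t\<close> for which \<open>dS\<close> has no atom at
  \<open>t\<close> or \<open>t - q\<close>, i.e. for all but countably many \<open>t\<close>; the substitution \<open>s = t + u\<close> turns
  the derivative into \<open>\<xi>(X)\<^sub>t\<close>.\<close>

section \<open>Lebesgue--Stieltjes measures of right-continuous functions\<close>

lemma mono_if_positive_increments_additive:
  fixes F :: "real \<Rightarrow> real"
  assumes add: "\<And>u v w. u \<le> v \<Longrightarrow> v \<le> w \<Longrightarrow>
      max (F w - F u) 0 = max (F v - F u) 0 + max (F w - F v) 0"
    and ab: "a \<le> b" "F a < F b"
  shows "mono F"
proof (rule monoI, rule ccontr)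
  fix x y :: real assume xy: "x \<le> y" "\<not> F x \<le> F y"
  define lo where "lo = min a x"
  define hi where "hi = max b y"
  have "max (F hi - F lo) 0 = max (F a - F lo) 0 + max (F b - F a) 0 + max (F hi - F b) 0"
    using add[of lo a hi] add[of a b hi] ab unfolding lo_def hi_def by auto
  moreover have "max (F hi - F lo) 0 = max (F x - F lo) 0 + max (F y - F x) 0 + max (F hi - F y) 0"
    using add[of lo x hi] add[of x y hi] xy ab unfolding lo_def hi_def by auto
  ultimately show False using ab xy by linarith
qed

lemma mono_if_Ioc_measure:
  fixes F :: "real \<Rightarrow> real" and \<mu> :: "real set \<Rightarrow> ennreal"
  assumes ms: "measure_space UNIV (sigma_sets UNIV ((\<lambda>(a, b). {a<..b}) ` {(a, b). a \<le> b})) \<mu>"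
    and Ioc: "\<And>u v. u \<le> v \<Longrightarrow> \<mu> {u<..v} = ennreal (F v - F u)"
    and ab: "a \<le> b" "F a < F b"
  shows "mono F"
proof -
  let ?\<Sigma> = "sigma_sets UNIV ((\<lambda>(a, b). {a<..b::real}) ` {(a, b). a \<le> b})"
  interpret sigma_algebra UNIV ?\<Sigma>
    using ms by (simp add: measure_space_def)
  have additive: "additive ?\<Sigma> \<mu>"
    using ms countably_additive_additive by (auto simp: measure_space_def)
  have Ioc_sets: "{u<..v} \<in> ?\<Sigma>" if "u \<le> v" for u v
    using that by (intro sigma_sets.Basic) (auto intro!: image_eqI[where x="(u, v)"])
  have ennreal_add: "ennreal (F w - F u) = ennreal (F v - F u) + ennreal (F w - F v)"
    if "u \<le> v" "v \<le> w" for u v w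
  proof -
    have "{u<..w} = {u<..v} \<union> {v<..w}" "{u<..v} \<inter> {v<..w} = {}" using that by auto
    then have "\<mu> {u<..w} = \<mu> {u<..v} + \<mu> {v<..w}"
      using additive Ioc_sets that unfolding additive_def by metis
    then show ?thesis using Ioc that by simp
  qed
  have "max (F w - F u) 0 = max (F v - F u) 0 + max (F w - F v) 0"
    if "u \<le> v" "v \<le> w" for u v w
  proof -
    have "ennreal (max (F w - F u) 0) = ennreal (max (F v - F u) 0 + max (F w - F v) 0)"
      using ennreal_add[OF that] by (simp add: ennreal_plus[symmetric])
    then show ?thesis by (subst (asm) ennreal_inj) auto
  qed
  then show ?thesis using mono_if_positive_increments_additive ab by blast
qed

text \<open>The library only treats monotone \<open>F\<close>; otherwise no measure has the prescribed
  values on half-open intervals, and \<^const>\<open>interval_measure\<close> falls back to the null measure.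
  Paths of the quadratic variation are not assumed monotone, so this case must be covered.\<close>

lemma emeasure_interval_measure_not_mono:
  fixes F :: "real \<Rightarrow> real"
  assumes "\<not> mono F"
  shows "emeasure (interval_measure F) A = 0"
proof -
  define I where "I = {(a, b). (a::real) \<le> b}"
  define G where "G = (\<lambda>(a, b). {a<..b::real})"
  define \<mu> where "\<mu> = (\<lambda>(a::real, b). ennreal (F b - F a))"
  have no_extension: "\<not> ((\<exists>\<mu>'. (\<forall>i\<in>I. \<mu>' (G i) = \<mu> i) \<and> measure_space UNIV (sigma_sets UNIV (G ` I)) \<mu>')
      \<and> \<not> (\<forall>i\<in>I. \<mu> i = 0))"
  proof
    assume "(\<exists>\<mu>'. (\<forall>i\<in>I. \<mu>' (G i) = \<mu> i) \<and> measure_space UNIV (sigma_sets UNIV (G ` I)) \<mu>')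
      \<and> \<not> (\<forall>i\<in>I. \<mu> i = 0)"
    then obtain \<mu>' a b where eq: "\<forall>i\<in>I. \<mu>' (G i) = \<mu> i"
      and ms: "measure_space UNIV (sigma_sets UNIV (G ` I)) \<mu>'"
      and ab: "a \<le> b" "ennreal (F b - F a) \<noteq> 0"
      unfolding I_def \<mu>_def by auto
    have "\<mu>' {u<..v} = ennreal (F v - F u)" if "u \<le> v" for u v
      using eq that unfolding I_def G_def \<mu>_def by auto
    moreover have "F a < F b"
      using ab(2) by (metis diff_gt_0_iff_gt ennreal_eq_0_iff not_le)
    ultimately have "mono F"
      using mono_if_Ioc_measure[of \<mu>' F a b] ms ab(1) unfolding G_def I_def by blast
    then show False using assms by contradiction
  qed
  have null: "interval_measure F = measure_of UNIV (G ` I) (\<lambda>_. 0)"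
    using no_extension unfolding interval_measure_def extend_measure_def I_def G_def \<mu>_def
    by (simp only: if_False)
  show ?thesis
  proof (cases "A \<in> sets (interval_measure F)")
    case True
    show ?thesis
      by (rule emeasure_measure_of[OF null]) (use True in \<open>auto simp: positive_def countably_additive_def\<close>)
  qed (simp add: emeasure_notin_sets)
qed

lemma emeasure_interval_measure_Ioc_finite:
  fixes F :: "real \<Rightarrow> real"
  assumes "\<And>a. continuous (at_right a) F"
  shows "emeasure (interval_measure F) {a<..b} < \<infinity>"
  using emeasure_interval_measure_Ioc_eq[of F a b] emeasure_interval_measure_not_mono[of F] assms
  by (cases "mono F") (auto simp: mono_def)

lemma countable_atoms_Ioc_finite:
  fixes \<nu> :: "real measure"
  assumes sets: "sets \<nu> = sets borel" and fin: "\<And>a b. emeasure \<nu> {a<..b} < \<infinity>"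
  shows "countable {x. emeasure \<nu> {x} \<noteq> 0}"
proof -
  define N where "N n = restrict_space \<nu> {-real n<..real n}" for n :: nat
  have sp: "space \<nu> = UNIV" using sets_eq_imp_space_eq[OF sets] by simp
  have Ioc_sets: "{-real n<..real n} \<in> sets \<nu>" for n using sets by simp
  have "finite_measure (N n)" for n
    using fin[of "-real n" "real n"] Ioc_sets[of n] sp
    by (intro finite_measureI) (simp add: N_def emeasure_restrict_space space_restrict_space less_top)
  then have "countable (\<Union>n. {x. measure (N n) {x} \<noteq> 0})"
    using finite_measure.countable_support by auto
  moreover have "{x. emeasure \<nu> {x} \<noteq> 0} \<subseteq> (\<Union>n. {x. measure (N n) {x} \<noteq> 0})"
  proof
    fix x assume "x \<in> {x. emeasure \<nu> {x} \<noteq> 0}"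
    then have nonnull: "emeasure \<nu> {x} \<noteq> 0" by simp
    obtain n :: nat where n: "\<bar>x\<bar> < real n" using reals_Archimedean2 by blast
    have "emeasure \<nu> {x} \<le> emeasure \<nu> {x - 1<..x}"
      by (rule emeasure_mono) (auto simp: sets)
    then have "emeasure \<nu> {x} < \<infinity>" using fin[of "x - 1" x] by (meson order.strict_trans1)
    then have "measure \<nu> {x} \<noteq> 0" using nonnull by (simp add: measure_def enn2real_eq_0_iff)
    moreover have "measure (N n) {x} = measure \<nu> {x}"
      unfolding N_def using Ioc_sets sp n by (subst measure_restrict_space) auto
    ultimately show "x \<in> (\<Union>n. {x. measure (N n) {x} \<noteq> 0})" by (intro UN_I[of n]) auto
  qed
  ultimately show ?thesis by (rule countable_subset[rotated])
qed

lemma continuous_at_right_shift: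
  fixes F :: "real \<Rightarrow> real"
  assumes "continuous (at_right (t + a)) F"
  shows "continuous (at_right a) (\<lambda>u. F (t + u))"
proof -
  have "(F \<longlongrightarrow> F (a + t)) (filtermap (\<lambda>x. x - (-t)) (at_right a))"
    using assms filtermap_at_right_shift[of "-t" a] by (simp add: continuous_within add.commute)
  then show ?thesis by (simp add: filterlim_filtermap continuous_within add.commute)
qed

lemma mono_shift_iff: "mono (\<lambda>u. F (t + u)) \<longleftrightarrow> mono (F :: real \<Rightarrow> real)"
proof
  assume shifted: "mono (\<lambda>u. F (t + u))"
  have "F x \<le> F y" if "x \<le> y" for x y
    using monoD[OF shifted, of "x - t" "y - t"] that by simp
  then show "mono F" by (simp add: mono_def)
qed (simp add: mono_def)

lemma emeasure_interval_measure_shift_Ioc: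
  fixes F :: "real \<Rightarrow> real"
  assumes rc: "\<And>a. continuous (at_right a) F"
  shows "emeasure (interval_measure (\<lambda>u. F (t + u))) {a<..b} = emeasure (interval_measure F) {a + t<..b + t}"
proof (cases "mono F")
  case True
  have rc_shift: "continuous (at_right a) (\<lambda>u. F (t + u))" for a
    using rc continuous_at_right_shift by blast
  have mono_shift: "x \<le> y \<Longrightarrow> F (t + x) \<le> F (t + y)" for x y
    using True by (simp add: monoD)
  have "emeasure (interval_measure (\<lambda>u. F (t + u))) {a<..b} = (if a \<le> b then F (t + b) - F (t + a) else 0)"
    by (rule emeasure_interval_measure_Ioc_eq[OF mono_shift rc_shift])
  moreover have "emeasure (interval_measure F) {a + t<..b + t} = (if a + t \<le> b + t then F (b + t) - F (a + t) else 0)"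
    by (rule emeasure_interval_measure_Ioc_eq[OF monoD[OF True] rc])
  ultimately show ?thesis by (simp add: add.commute)
next
  case False
  then show ?thesis using mono_shift_iff[of F t] by (simp add: emeasure_interval_measure_not_mono)
qed

lemma interval_measure_shift:
  fixes F :: "real \<Rightarrow> real"
  assumes rc: "\<And>a. continuous (at_right a) F"
  shows "interval_measure (\<lambda>u. F (t + u)) = distr (interval_measure F) borel (\<lambda>s. s - t)"
proof -
  let ?E = "range (\<lambda>(a, b). {a<..b::real})"
  have "x \<in> (\<Union>i::nat. {-real i<..real i})" for x :: real
  proof -
    obtain n :: nat where "\<bar>x\<bar> < real n" using reals_Archimedean2 by blast
    then show ?thesis by (intro UN_I[of n]) auto
  qed
  then show ?thesis
  proof (intro measure_eqI_generator_eq[where E="?E" and \<Omega>=UNIV and A="\<lambda>i. {-real i<..real i}"])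
    show "Int_stable ?E"
      by (auto simp: Int_stable_def intro!: image_eqI[where x="(max _ _, min _ _)"])
    show "emeasure (interval_measure (\<lambda>u. F (t + u))) X = emeasure (distr (interval_measure F) borel (\<lambda>s. s - t)) X"
      if "X \<in> ?E" for X
    proof -
      obtain a b where X: "X = {a<..b}" using \<open>X \<in> ?E\<close> by auto
      have "(\<lambda>s. s - t) -` {a<..b} = {a + t<..b + t}" by auto
      then show ?thesis
        unfolding X emeasure_interval_measure_shift_Ioc[OF rc] by (subst emeasure_distr) auto
    qed
    have "continuous (at_right a) (\<lambda>u. F (t + u))" for a
      using rc continuous_at_right_shift by blast
    then show "emeasure (interval_measure (\<lambda>u. F (t + u))) {-real i<..real i} \<noteq> \<infinity>" for i
      using emeasure_interval_measure_Ioc_finite by (simp add: less_top)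
  qed (auto simp: borel_sigma_sets_Ioc)
qed

section \<open>Cadlag paths\<close>

lemma borel_measurable_continuous_at_right:
  fixes h :: "real \<Rightarrow> real"
  assumes rc: "\<And>s. continuous (at_right s) h"
  shows "h \<in> borel_measurable borel"
proof -
  define c where "c n s = real_of_int \<lceil>real (Suc n) * s\<rceil> / real (Suc n)" for n s
  have "(\<lambda>s. h (c n s)) \<in> borel_measurable borel" for n
  proof -
    have "(\<lambda>s. (\<lambda>k::int. \<lambda>s. h (real_of_int k / real (Suc n))) \<lceil>real (Suc n) * s\<rceil> s) \<in> borel_measurable borel"
      by (rule measurable_compose_countable) (simp, measurable)
    then show ?thesis unfolding c_def by simp
  qed
  moreover have "(\<lambda>n. h (c n s)) \<longlonglongrightarrow> h s" for s
  proof -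
    have c: "s \<le> c n s" "c n s \<le> s + inverse (real (Suc n))" for n
    proof -
      have "real (Suc n) * s \<le> real_of_int \<lceil>real (Suc n) * s\<rceil>"
        "real_of_int \<lceil>real (Suc n) * s\<rceil> < real (Suc n) * s + 1"
        by linarith+
      then show "s \<le> c n s" "c n s \<le> s + inverse (real (Suc n))"
        unfolding c_def by (simp_all add: field_simps del: of_nat_Suc)
    qed
    have lim: "(\<lambda>n. c n s) \<longlonglongrightarrow> s"
    proof (rule tendsto_sandwich[of "\<lambda>n. s" _ _ "\<lambda>n. s + inverse (real (Suc n))"])
      show "(\<lambda>n. s + inverse (real (Suc n))) \<longlonglongrightarrow> s"
        using tendsto_add[OF tendsto_const LIMSEQ_inverse_real_of_nat, of s] by simp
    qed (use c in auto)
    have "c n s \<in> {s..s + 1}" for n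
      using c[of n] inverse_le_1_iff[of "real (Suc n)"] by auto
    moreover have "continuous (at s within {s..s + 1}) h"
      using rc[of s] by (simp add: continuous_within at_within_Icc_at_right)
    ultimately show ?thesis using lim unfolding continuous_within_sequentially comp_def
      by (auto dest!: spec[of _ "\<lambda>n. c n s"])
  qed
  ultimately show ?thesis by (rule borel_measurable_LIMSEQ_real[rotated])
qed

lemma cadlag_from_locally_bounded:
  fixes x :: "real \<Rightarrow> real"
  assumes cad: "cadlag_from a x" and z: "a \<le> z"
  shows "\<exists>e>0. \<exists>C. \<forall>s. a \<le> s \<and> \<bar>s - z\<bar> < e \<longrightarrow> \<bar>x s\<bar> \<le> C"
proof -
  have "(x \<longlongrightarrow> x z) (at_right z)" using cad z unfolding cadlag_from_def by auto
  then have "eventually (\<lambda>s. dist (x s) (x z) < 1) (at_right z)" by (rule tendstoD) simp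
  then obtain b1 where b1: "b1 > z" "\<And>s. z < s \<Longrightarrow> s < b1 \<Longrightarrow> dist (x s) (x z) < 1"
    unfolding eventually_at_right_field by auto
  have right: "\<bar>x s\<bar> \<le> \<bar>x z\<bar> + 1" if "z \<le> s" "s < b1" for s
    using b1(2)[of s] that by (cases "s = z") (auto simp: dist_real_def)
  show ?thesis
  proof (cases "z = a")
    case True
    then show ?thesis using b1(1) right by (intro exI[of _ "b1 - z"] conjI exI[of _ "\<bar>x z\<bar> + 1"]) auto
  next
    case False
    then have "a < z" using z by simp
    then obtain l where "(x \<longlongrightarrow> l) (at_left z)" using cad unfolding cadlag_from_def by blast
    then have "eventually (\<lambda>s. dist (x s) l < 1) (at_left z)" by (rule tendstoD) simp
    then obtain b0 where b0: "b0 < z" "\<And>s. b0 < s \<Longrightarrow> s < z \<Longrightarrow> dist (x s) l < 1"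
      unfolding eventually_at_left_field by auto
    have left: "\<bar>x s\<bar> \<le> \<bar>l\<bar> + 1" if "b0 < s" "s < z" for s
      using b0(2)[OF that] by (simp add: dist_real_def)
    show ?thesis
    proof (intro exI conjI allI impI)
      show "min (b1 - z) (z - b0) > 0" using b0 b1 by simp
      fix s assume s: "a \<le> s \<and> \<bar>s - z\<bar> < min (b1 - z) (z - b0)"
      show "\<bar>x s\<bar> \<le> max (\<bar>x z\<bar> + 1) (\<bar>l\<bar> + 1)"
      proof (cases "s < z")
        case True then show ?thesis using left[of s] s by (auto simp: abs_if split: if_splits)
      next
        case False then show ?thesis using right[of s] s by (auto simp: abs_if split: if_splits)
      qed
    qed
  qed
qed

lemma cadlag_from_bounded:
  fixes x :: "real \<Rightarrow> real"
  assumes cad: "cadlag_from a x"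
  shows "\<exists>C. \<forall>s\<in>{a..b}. \<bar>x s\<bar> \<le> C"
proof -
  obtain e C where e: "\<And>z. z \<in> {a..b} \<Longrightarrow> e z > 0"
    and C: "\<And>z s. z \<in> {a..b} \<Longrightarrow> a \<le> s \<Longrightarrow> \<bar>s - z\<bar> < e z \<Longrightarrow> \<bar>x s\<bar> \<le> C z"
    using cadlag_from_locally_bounded[OF cad] by (simp only: atLeastAtMost_iff) metis
  have cover: "{a..b} \<subseteq> (\<Union>z\<in>{a..b}. ball z (e z))"
    using e by force
  obtain D where D: "D \<subseteq> {a..b}" "finite D" "{a..b} \<subseteq> (\<Union>z\<in>D. ball z (e z))"
    by (rule compactE_image[OF compact_Icc _ cover]) auto
  show ?thesis
  proof (intro exI ballI)
    fix s assume s: "s \<in> {a..b}"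
    then obtain z where z: "z \<in> D" "s \<in> ball z (e z)" using D by auto
    then have "\<bar>x s\<bar> \<le> C z" using C[of z s] D s by (auto simp: dist_real_def abs_minus_commute)
    also have "C z \<le> (\<Sum>w\<in>D. \<bar>C w\<bar>)"
      using z D(2) by (meson abs_ge_self member_le_sum abs_ge_zero order_trans)
    finally show "\<bar>x s\<bar> \<le> (\<Sum>w\<in>D. \<bar>C w\<bar>)" .
  qed
qed

lemma cadlag_from_frozen_continuous_at_right:
  fixes x :: "real \<Rightarrow> real"
  assumes cad: "cadlag_from a x"
  shows "continuous (at_right s) (\<lambda>\<tau>. x (max \<tau> a))"
proof (cases "s < a")
  case True
  have "eventually (\<lambda>\<tau>. \<tau> \<in> {s<..<a}) (at_right s)" by (rule eventually_at_right_real[OF True])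
  then have "eventually (\<lambda>\<tau>. x a = x (max \<tau> a)) (at_right s)" by eventually_elim auto
  moreover have "((\<lambda>\<tau>. x a) \<longlongrightarrow> x (max s a)) (at_right s)" using True by simp
  ultimately show ?thesis
    unfolding continuous_within by (rule Lim_transform_eventually[rotated])
next
  case False
  then have "(x \<longlongrightarrow> x s) (at_right s)" using cad unfolding cadlag_from_def by auto
  moreover have "eventually (\<lambda>\<tau>. x \<tau> = x (max \<tau> a)) (at_right s)"
    using False by (auto simp: eventually_at_right_field intro!: exI[of _ "s + 1"])
  ultimately have "((\<lambda>\<tau>. x (max \<tau> a)) \<longlongrightarrow> x s) (at_right s)" by (rule Lim_transform_eventually)
  then show ?thesis using False by (simp add: continuous_within)
qed

lemma cadlag_from_left_lim:
  fixes x :: "real \<Rightarrow> real"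
  assumes cad: "cadlag_from a x" and s: "a < s"
  shows "(x \<longlongrightarrow> left_lim x s) (at_left s)"
proof -
  obtain l where l: "(x \<longlongrightarrow> l) (at_left s)" using cad s unfolding cadlag_from_def by auto
  moreover have "left_lim x s = l" unfolding left_lim_def by (rule tendsto_Lim[OF trivial_limit_at_left_real l])
  ultimately show ?thesis by simp
qed

lemma borel_measurable_left_lim:
  fixes x :: "real \<Rightarrow> real"
  assumes cad: "cadlag_from a x"
  shows "(\<lambda>s. if a < s then left_lim x s else 0) \<in> borel_measurable borel"
proof -
  define u where "u n s = (if a < s then x (max (s - inverse (real (Suc n))) a) else 0)" for n s
  have frozen: "(\<lambda>s. x (max s a)) \<in> borel_measurable borel"
    using cadlag_from_frozen_continuous_at_right[OF cad] by (rule borel_measurable_continuous_at_right)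
  have "u n \<in> borel_measurable borel" for n
  proof -
    have "(\<lambda>s. x (max (s - inverse (real (Suc n))) a)) \<in> borel_measurable borel"
      using measurable_compose[OF _ frozen, of "\<lambda>s. s - inverse (real (Suc n))" borel] by simp
    then show ?thesis unfolding u_def by measurable
  qed
  moreover have "(\<lambda>n. u n s) \<longlonglongrightarrow> (if a < s then left_lim x s else 0)" for s
  proof (cases "a < s")
    case True
    have "eventually (\<lambda>y. y \<in> {a<..<s}) (at_left s)" by (rule eventually_at_left_real[OF True])
    then have "eventually (\<lambda>y. x y = x (max y a)) (at_left s)" by eventually_elim auto
    then have lim: "((\<lambda>y. x (max y a)) \<longlongrightarrow> left_lim x s) (at_left s)"
      using cadlag_from_left_lim[OF cad True] by (rule Lim_transform_eventually[rotated])
    have "(\<lambda>n. s - inverse (real (Suc n))) \<longlonglongrightarrow> s"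
      using tendsto_diff[OF tendsto_const LIMSEQ_inverse_real_of_nat, of s] by simp
    then have "filterlim (\<lambda>n. s - inverse (real (Suc n))) (at_left s) sequentially"
      by (rule tendsto_imp_filterlim_at_left) simp
    then show ?thesis
      using filterlim_compose[OF lim] True unfolding u_def by simp
  qed (simp add: u_def)
  ultimately show ?thesis by (rule borel_measurable_LIMSEQ_real[rotated])
qed

lemma left_lim_abs_le:
  fixes x :: "real \<Rightarrow> real"
  assumes cad: "cadlag_from a x" and C: "\<forall>s\<in>{a..b}. \<bar>x s\<bar> \<le> C" and s: "s \<in> {a<..b}"
  shows "\<bar>left_lim x s\<bar> \<le> C"
proof (rule tendsto_upperbound[OF tendsto_rabs[OF cadlag_from_left_lim[OF cad]]])
  have "eventually (\<lambda>y. y \<in> {a<..<s}) (at_left s)" by (rule eventually_at_left_real) (use s in simp)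
  then show "eventually (\<lambda>y. \<bar>x y\<bar> \<le> C) (at_left s)" by eventually_elim (use C s in auto)
qed (use s in auto)

section \<open>The kernels \<open>F\<^sub>\<mu>\<close> and \<open>F\<^sub>\<nu>\<close>\<close>

locale delay_density =
  fixes q :: real and f :: "real \<Rightarrow> real"
  assumes q_nonneg: "q \<ge> 0"
    and density_nonneg_on: "\<forall>u\<in>{-q..0}. f u \<ge> 0"
    and density_continuous: "continuous_on {-q..0} f"
    and density_zero_outside: "\<forall>u. u \<notin> {-q..0} \<longrightarrow> f u = 0"
begin

text \<open>Since \<open>f\<close> vanishes off \<open>[-q, 0]\<close>, \<open>cumulative v\<close> is \<open>\<integral>\<^sub>-\<^sub>\<infinity>\<^sup>v f\<close>.\<close>

definition cumulative :: "real \<Rightarrow> real" where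
  "cumulative v = integral {-q..max (-q) (min v 0)} f"

lemma density_nonneg: "f u \<ge> 0"
  using density_nonneg_on density_zero_outside by (cases "u \<in> {-q..0}") auto

lemma density_bounded: "\<exists>B\<ge>0. \<forall>u. \<bar>f u\<bar> \<le> B"
proof -
  have "bounded (f ` {-q..0})" by (rule compact_imp_bounded[OF compact_continuous_image[OF density_continuous compact_Icc]])
  then obtain B where B: "\<forall>y\<in>f ` {-q..0}. norm y \<le> B" by (auto simp: bounded_iff)
  have "\<bar>f u\<bar> \<le> max B 0" for u
    using B density_zero_outside by (cases "u \<in> {-q..0}") force+
  then show ?thesis by (intro exI[of _ "max B 0"]) auto
qed

lemma density_borel_measurable: "f \<in> borel_measurable borel"
proof -
  have "(\<lambda>x. indicator {-q..0} x *\<^sub>R f x) \<in> borel_measurable borel"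
    by (rule borel_measurable_continuous_on_indicator) (auto simp: density_continuous)
  moreover have "(\<lambda>x. indicator {-q..0} x *\<^sub>R f x) = f"
    using density_zero_outside by (auto simp: fun_eq_iff indicator_def)
  ultimately show ?thesis by simp
qed

lemma density_integrable_on: "-q \<le> a \<Longrightarrow> b \<le> 0 \<Longrightarrow> f integrable_on {a..b}"
  by (rule integrable_continuous_real) (rule continuous_on_subset[OF density_continuous], auto)

lemma cumulative_diff:
  assumes "-q \<le> a" "a \<le> b" "b \<le> 0"
  shows "cumulative b - cumulative a = integral {a..b} f"
proof -
  have "integral {-q..a} f + integral {a..b} f = integral {-q..b} f"
    using Henstock_Kurzweil_Integration.integral_combine[of "-q" a b f] assms density_integrable_on[of "-q" b] by auto
  then show ?thesis using assms unfolding cumulative_def by (simp add: max_def min_def)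
qed

lemma cumulative_clamp: "cumulative (max (-q) (min v 0)) = cumulative v"
  unfolding cumulative_def using q_nonneg by (simp add: max_def min_def)

lemma clamp_le: "a \<le> b \<Longrightarrow> max (-q) (min a 0) \<le> max (-q) (min b 0)"
  by (simp add: max_def min_def)

lemma cumulative_mono:
  assumes "a \<le> b"
  shows "cumulative a \<le> cumulative b"
proof -
  define a' b' where "a' = max (-q) (min a 0)" and "b' = max (-q) (min b 0)"
  have ab': "-q \<le> a'" "a' \<le> b'" "b' \<le> 0"
    using clamp_le[OF assms] q_nonneg unfolding a'_def b'_def by auto
  have "integral {a'..b'} f \<ge> 0"
    using density_integrable_on[of a' b'] ab' density_nonneg by (intro integral_nonneg) auto
  then show ?thesis
    using cumulative_diff[OF ab'] cumulative_clamp unfolding a'_def b'_def by simp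
qed

lemma cumulative_lipschitz:
  assumes B: "\<forall>u. \<bar>f u\<bar> \<le> B"
  shows "\<bar>cumulative a - cumulative b\<bar> \<le> B * \<bar>a - b\<bar>"
proof -
  have bound: "\<bar>cumulative b - cumulative a\<bar> \<le> B * (b - a)" if "a \<le> b" for a b
  proof -
    define a' b' where "a' = max (-q) (min a 0)" and "b' = max (-q) (min b 0)"
    have ab': "-q \<le> a'" "a' \<le> b'" "b' \<le> 0" "b' - a' \<le> b - a"
      using that clamp_le[OF that] q_nonneg unfolding a'_def b'_def by (auto simp: max_def min_def)
    have "B \<ge> 0" using B[rule_format, of 0] by linarith
    have "(f has_integral integral {a'..b'} f) {a'..b'}"
      using integrable_integral[OF density_integrable_on[OF ab'(1,3)]] .
    then have "norm (integral {a'..b'} f) \<le> B * (b' - a')"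
      using has_integral_bound_real[where S="{}" and B=B and f=f and a=a' and b=b'] B \<open>B \<ge> 0\<close> ab'
      by auto
    then have "\<bar>cumulative b' - cumulative a'\<bar> \<le> B * (b' - a')"
      using cumulative_diff[OF ab'(1-3)] by simp
    also have "\<dots> \<le> B * (b - a)"
      using ab'(4) \<open>B \<ge> 0\<close> by (rule mult_left_mono)
    finally show ?thesis using cumulative_clamp unfolding a'_def b'_def by simp
  qed
  show ?thesis
    using bound[of a b] bound[of b a] by (cases "a \<le> b") (auto simp: abs_minus_commute)
qed

lemma cumulative_has_derivative:
  assumes "v \<noteq> -q" "v \<noteq> 0"
  shows "(cumulative has_real_derivative f v) (at v)"
proof -
  have const: "((\<lambda>_. cumulative v) has_real_derivative 0) (at v)" by simp
  consider "v < -q" | "0 < v" | "-q < v" "v < 0" using assms by linarith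
  then show ?thesis
  proof cases
    case 1
    have "(cumulative has_real_derivative 0) (at v)"
      by (rule has_field_derivative_transform_within_open[OF const, where S="{..< -q}"])
        (use 1 in \<open>auto simp: cumulative_def max_def min_def\<close>)
    then show ?thesis using density_zero_outside 1 by simp
  next
    case 2
    have "(cumulative has_real_derivative 0) (at v)"
      by (rule has_field_derivative_transform_within_open[OF const, where S="{0<..}"])
        (use 2 q_nonneg in \<open>auto simp: cumulative_def max_def min_def\<close>)
    then show ?thesis using density_zero_outside 2 by simp
  next
    case 3
    have "((\<lambda>v. integral {-q..v} f) has_real_derivative f v) (at v within {-q..0})"
      by (rule integral_has_real_derivative[OF density_continuous]) (use 3 in auto)
    then have "((\<lambda>v. integral {-q..v} f) has_real_derivative f v) (at v)"
      using at_within_interior[of v "{-q..0}"] 3 by simp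
    then show ?thesis
      by (rule has_field_derivative_transform_within_open[where S="{-q<..<0}"])
        (use 3 in \<open>auto simp: cumulative_def max_def min_def\<close>)
  qed
qed

lemma lipschitz_on_cumulative: "\<exists>B. B-lipschitz_on UNIV cumulative"
proof -
  obtain B where "B \<ge> 0" "\<forall>u. \<bar>f u\<bar> \<le> B" using density_bounded by auto
  then have "B-lipschitz_on UNIV cumulative"
    using cumulative_lipschitz by (intro lipschitz_onI) (auto simp: dist_real_def)
  then show ?thesis ..
qed

lemma cumulative_eq_cumulative_0: "0 \<le> v \<Longrightarrow> cumulative v = cumulative 0"
  unfolding cumulative_def using q_nonneg by (simp add: max_def min_def)

lemma Fker_eq: "Fker q f t s = max 0 (cumulative s - cumulative (s - t))"
proof -
  define a b where "a = max (-q) (s - t)" and "b = min s 0"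
  have ab: "-q \<le> a" "b \<le> 0" unfolding a_def b_def by auto
  show ?thesis
  proof (cases "a \<le> b")
    case True
    have "set_integrable lborel {a..b} f"
      by (rule borel_integrable_atLeastAtMost') (rule continuous_on_subset[OF density_continuous], use ab in auto)
    then have "Fker q f t s = integral {a..b} f"
      unfolding Fker_def a_def[symmetric] b_def[symmetric] by (rule set_borel_integral_eq_integral)
    also have "\<dots> = cumulative b - cumulative a" using cumulative_diff[of a b] True ab by simp
    also have "\<dots> = cumulative s - cumulative (s - t)"
    proof -
      have "s - t \<le> 0" using True ab unfolding a_def b_def by linarith
      then have "a = max (-q) (min (s - t) 0)" "b = max (-q) (min s 0)"
        using True ab unfolding a_def b_def by (auto simp: max_def min_def)
      then show ?thesis using cumulative_clamp by simp
    qed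
    finally have "Fker q f t s = cumulative s - cumulative (s - t)" .
    moreover have "0 \<le> t" using True unfolding a_def b_def by linarith
    ultimately show ?thesis using cumulative_mono[of "s - t" s] by simp
  next
    case False
    then have "Fker q f t s = 0" unfolding Fker_def a_def b_def by (simp add: set_lebesgue_integral_def)
    moreover have "max (-q) (min s 0) \<le> max (-q) (min (s - t) 0)"
      using False q_nonneg unfolding a_def b_def by (auto simp: max_def min_def split: if_splits)
    then have "cumulative s \<le> cumulative (s - t)"
      using cumulative_mono cumulative_clamp by metis
    ultimately show ?thesis by simp
  qed
qed

lemma Fker_nonneg: "Fker q f t s \<ge> 0"
  unfolding Fker_eq by simp

lemma Fker_eq_cumulative_diff: "0 \<le> t \<Longrightarrow> Fker q f t s = cumulative s - cumulative (s - t)"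
  unfolding Fker_eq using cumulative_mono[of "s - t" s] by simp

lemma Fker_lipschitz: "\<exists>C. C-lipschitz_on UNIV (\<lambda>(t, s). Fker q f t s)"
proof -
  obtain B where B: "B-lipschitz_on UNIV cumulative" using lipschitz_on_cumulative by blast
  have Lip: "\<bar>cumulative a - cumulative b\<bar> \<le> B * \<bar>a - b\<bar>" for a b
    using lipschitz_onD[OF B, of a b] by (simp add: dist_real_def)
  have "dist (Fker q f t s) (Fker q f t' s') \<le> 3 * B * dist (t, s) (t', s')" for t s t' s'
  proof -
    define d where "d = dist (t, s) (t', s')"
    have d: "\<bar>t - t'\<bar> \<le> d" "\<bar>s - s'\<bar> \<le> d"
      using dist_fst_le[of "(t, s)" "(t', s')"] dist_snd_le[of "(t, s)" "(t', s')"]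
      unfolding d_def by (simp_all add: dist_real_def)
    have "dist (Fker q f t s) (Fker q f t' s')
        \<le> \<bar>cumulative s - cumulative s'\<bar> + \<bar>cumulative (s - t) - cumulative (s' - t')\<bar>"
      unfolding Fker_eq dist_real_def by (simp add: max_def abs_if)
    also have "\<dots> \<le> B * \<bar>s - s'\<bar> + B * \<bar>(s - t) - (s' - t')\<bar>"
      using Lip by (intro add_mono)
    also have "\<dots> \<le> B * d + B * (2 * d)"
      using lipschitz_on_nonneg[OF B] d by (intro add_mono mult_left_mono) auto
    finally show ?thesis unfolding d_def by (simp add: algebra_simps)
  qed
  then show ?thesis
    using lipschitz_on_nonneg[OF B] by (intro exI[of _ "3 * B"] lipschitz_onI) auto
qed

end

section \<open>Differentiating integrals of shifted Lipschitz functions\<close>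

lemma measurable_sets_borel:
  "sets \<nu> = sets borel \<Longrightarrow> h \<in> borel_measurable borel \<Longrightarrow> h \<in> borel_measurable \<nu>"
  using measurable_cong_sets[of \<nu> borel borel borel] by simp

lemma set_integrable_bounded:
  fixes \<nu> :: "real measure" and h :: "real \<Rightarrow> real"
  assumes "sets \<nu> = sets borel" "A \<in> sets borel" "emeasure \<nu> A < \<infinity>"
    and "h \<in> borel_measurable borel" "\<And>s. s \<in> A \<Longrightarrow> \<bar>h s\<bar> \<le> K"
  shows "set_integrable \<nu> A h"
  unfolding set_integrable_def
  by (rule integrableI_bounded_set_indicator[where B=K]) (use assms measurable_sets_borel in auto)

lemma set_integral_abs_le:
  fixes \<nu> :: "real measure" and h :: "real \<Rightarrow> real"
  assumes sets: "sets \<nu> = sets borel" and A: "A \<in> sets borel" "emeasure \<nu> A < \<infinity>"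
    and h: "h \<in> borel_measurable borel" "\<And>s. s \<in> A \<Longrightarrow> \<bar>h s\<bar> \<le> K"
  shows "\<bar>LINT s:A|\<nu>. h s\<bar> \<le> K * measure \<nu> A"
proof -
  have int: "set_integrable \<nu> A h" "set_integrable \<nu> A (\<lambda>_. K)" "set_integrable \<nu> A (\<lambda>s. - h s)"
    using set_integrable_bounded[OF assms] set_integrable_bounded[OF sets A, of "\<lambda>_. K" "\<bar>K\<bar>"]
      set_integrable_bounded[OF sets A, of "\<lambda>s. - h s" K] h by auto
  have "(LINT s:A|\<nu>. h s) \<le> (LINT s:A|\<nu>. K)" "(LINT s:A|\<nu>. - h s) \<le> (LINT s:A|\<nu>. K)"
    using int h(2) by (auto intro!: set_integral_mono simp: abs_le_iff)
  moreover have "(LINT s:A|\<nu>. K) = K * measure \<nu> A"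
    using set_integral_const[of A \<nu> K] A sets by simp
  moreover have "(LINT s:A|\<nu>. - h s) = - (LINT s:A|\<nu>. h s)"
    by (simp add: set_lebesgue_integral_def)
  ultimately show ?thesis by linarith
qed

lemma shifted_difference_quotient_tendsto:
  fixes Q :: "real \<Rightarrow> real"
  assumes D: "(Q has_real_derivative d) (at (s - t))" and X: "X \<longlonglongrightarrow> t" "\<forall>i. X i \<noteq> t"
  shows "(\<lambda>i. (Q (s - t) - Q (s - X i)) / (X i - t)) \<longlonglongrightarrow> d"
proof -
  have "((\<lambda>z. (Q z - Q (s - t)) / (z - (s - t))) \<longlongrightarrow> d) (at (s - t))"
    using D by (simp add: has_field_derivative_iff)
  moreover have "(\<lambda>i. s - X i) \<longlonglongrightarrow> s - t"
    using X(1) by (intro tendsto_diff tendsto_const)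
  moreover have "\<forall>i. s - X i \<in> UNIV - {s - t}"
    using X(2) by auto
  ultimately have "(\<lambda>i. (Q (s - X i) - Q (s - t)) / ((s - X i) - (s - t))) \<longlonglongrightarrow> d"
    unfolding tendsto_at_iff_sequentially comp_def by (auto dest!: spec[of _ "\<lambda>i. s - X i"])
  moreover have "(Q (s - X i) - Q (s - t)) / ((s - X i) - (s - t)) = (Q (s - t) - Q (s - X i)) / (X i - t)" for i
  proof -
    have "(s - X i) - (s - t) = t - X i" by simp
    then show ?thesis by (metis minus_diff_eq minus_divide_divide)
  qed
  ultimately show ?thesis by simp
qed

context
  fixes \<nu> :: "real measure" and A :: "real set" and g Q :: "real \<Rightarrow> real" and Cg B :: real
  assumes sets: "sets \<nu> = sets borel"
    and A_sets[measurable]: "A \<in> sets borel" and A_finite: "emeasure \<nu> A < \<infinity>"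
    and g_measurable[measurable]: "g \<in> borel_measurable borel"
    and g: "\<And>s. s \<in> A \<Longrightarrow> \<bar>g s\<bar> \<le> Cg"
    and Q: "B-lipschitz_on UNIV Q"
begin

private lemma Q_diff: "\<bar>Q a - Q b\<bar> \<le> B * \<bar>a - b\<bar>"
  using lipschitz_onD[OF Q, of a b] by (simp add: dist_real_def)

private lemma Q_measurable: "Q \<in> borel_measurable borel"
  using lipschitz_on_continuous_on[OF Q] by (rule borel_measurable_continuous_onI)

private lemma shifted_difference_set_integrable:
  "set_integrable \<nu> A (\<lambda>s. (Q s - Q (s - c)) * g s)"
proof (rule set_integrable_bounded[OF sets A_sets A_finite, where K="B * \<bar>c\<bar> * Cg"])
  note Q_measurable[measurable]
  show "(\<lambda>s. (Q s - Q (s - c)) * g s) \<in> borel_measurable borel"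
    by measurable
  fix s assume "s \<in> A"
  then show "\<bar>(Q s - Q (s - c)) * g s\<bar> \<le> B * \<bar>c\<bar> * Cg"
    using Q_diff[of s "s - c"] g[of s] lipschitz_on_nonneg[OF Q]
    by (simp add: abs_mult mult_mono')
qed

private lemma shifted_set_integral_diff:
  "(LINT s:A|\<nu>. (Q s - Q (s - \<tau>)) * g s) - (LINT s:A|\<nu>. (Q s - Q (s - \<tau>')) * g s)
     = (LINT s:A|\<nu>. (Q (s - \<tau>') - Q (s - \<tau>)) * g s)"
  by (subst set_integral_diff(2)[OF shifted_difference_set_integrable shifted_difference_set_integrable, symmetric])
    (simp add: algebra_simps)

lemma lipschitz_shifted_set_integral:
  "\<bar>(LINT s:A|\<nu>. (Q s - Q (s - \<tau>)) * g s) - (LINT s:A|\<nu>. (Q s - Q (s - \<tau>')) * g s)\<bar>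
     \<le> B * Cg * measure \<nu> A * \<bar>\<tau> - \<tau>'\<bar>"
proof -
  have "\<bar>LINT s:A|\<nu>. (Q (s - \<tau>') - Q (s - \<tau>)) * g s\<bar> \<le> (B * \<bar>\<tau> - \<tau>'\<bar> * Cg) * measure \<nu> A"
  proof (rule set_integral_abs_le[OF sets A_sets A_finite])
    note Q_measurable[measurable]
    show "(\<lambda>s. (Q (s - \<tau>') - Q (s - \<tau>)) * g s) \<in> borel_measurable borel"
      by measurable
    fix s assume "s \<in> A"
    then show "\<bar>(Q (s - \<tau>') - Q (s - \<tau>)) * g s\<bar> \<le> B * \<bar>\<tau> - \<tau>'\<bar> * Cg"
      using Q_diff[of "s - \<tau>'" "s - \<tau>"] g[of s] lipschitz_on_nonneg[OF Q]
      by (simp add: abs_mult mult_mono' abs_minus_commute)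
  qed
  then show ?thesis unfolding shifted_set_integral_diff by (simp add: algebra_simps)
qed

text \<open>The difference quotients of \<open>Q\<close> are bounded by \<open>B\<close>, so dominated convergence applies.\<close>

private lemma difference_quotient_set_integral_tendsto:
  assumes f[measurable]: "f \<in> borel_measurable borel"
    and D: "AE s in \<nu>. s \<in> A \<longrightarrow> (Q has_real_derivative f (s - t)) (at (s - t))"
    and X: "X \<longlonglongrightarrow> t" "\<forall>i. X i \<noteq> t"
  shows "(\<lambda>i. LINT s:A|\<nu>. (Q (s - t) - Q (s - X i)) / (X i - t) * g s) \<longlonglongrightarrow> (LINT s:A|\<nu>. f (s - t) * g s)"
  unfolding set_lebesgue_integral_def
proof (rule integral_dominated_convergence[where w="\<lambda>s. indicator A s * (B * Cg)"])
  note Q_measurable[measurable]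
  define quot where "quot i s = (Q (s - t) - Q (s - X i)) / (X i - t)" for i s
  show "(\<lambda>s. indicator A s *\<^sub>R (f (s - t) * g s)) \<in> borel_measurable \<nu>"
    by (intro measurable_sets_borel[OF sets]) measurable
  show "(\<lambda>s. indicator A s *\<^sub>R ((Q (s - t) - Q (s - X i)) / (X i - t) * g s)) \<in> borel_measurable \<nu>" for i
    by (intro measurable_sets_borel[OF sets]) measurable
  show "integrable \<nu> (\<lambda>s. indicator A s * (B * Cg))"
    using set_integrable_bounded[OF sets A_sets A_finite, of "\<lambda>_. B * Cg" "\<bar>B * Cg\<bar>"]
    by (simp add: set_integrable_def)
  show "AE s in \<nu>. norm (indicator A s *\<^sub>R ((Q (s - t) - Q (s - X i)) / (X i - t) * g s))
      \<le> indicator A s * (B * Cg)" for i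
  proof (intro AE_I2)
    fix s
    have "\<bar>quot i s\<bar> \<le> B"
      using Q_diff[of "s - t" "s - X i"] X(2) lipschitz_on_nonneg[OF Q] unfolding quot_def
      by (simp add: divide_le_eq abs_minus_commute)
    then have "s \<in> A \<Longrightarrow> \<bar>quot i s\<bar> * \<bar>g s\<bar> \<le> B * Cg"
      using g[of s] lipschitz_on_nonneg[OF Q] by (intro mult_mono) auto
    then show "norm (indicator A s *\<^sub>R ((Q (s - t) - Q (s - X i)) / (X i - t) * g s))
        \<le> indicator A s * (B * Cg)"
      unfolding quot_def by (simp add: abs_mult indicator_def)
  qed
  show "AE s in \<nu>. (\<lambda>i. indicator A s *\<^sub>R ((Q (s - t) - Q (s - X i)) / (X i - t) * g s))
      \<longlonglongrightarrow> indicator A s *\<^sub>R (f (s - t) * g s)"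
    using D
  proof eventually_elim
    case (elim s)
    show ?case
    proof (cases "s \<in> A")
      case True
      then have "(\<lambda>i. (Q (s - t) - Q (s - X i)) / (X i - t)) \<longlonglongrightarrow> f (s - t)"
        using elim X by (intro shifted_difference_quotient_tendsto) auto
      then have "(\<lambda>i. (Q (s - t) - Q (s - X i)) / (X i - t) * g s) \<longlonglongrightarrow> f (s - t) * g s"
        by (rule tendsto_mult_right)
      then show ?thesis using True by simp
    qed simp
  qed
qed

lemma shifted_set_integral_has_derivative:
  assumes "f \<in> borel_measurable borel"
    and "AE s in \<nu>. s \<in> A \<longrightarrow> (Q has_real_derivative f (s - t)) (at (s - t))"
  shows "((\<lambda>\<tau>. LINT s:A|\<nu>. (Q s - Q (s - \<tau>)) * g s) has_real_derivative
           (LINT s:A|\<nu>. f (s - t) * g s)) (at t)"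
proof -
  define \<Psi> where "\<Psi> \<tau> = (LINT s:A|\<nu>. (Q s - Q (s - \<tau>)) * g s)" for \<tau>
  have quotient: "(\<Psi> y - \<Psi> t) / (y - t) = (LINT s:A|\<nu>. (Q (s - t) - Q (s - y)) / (y - t) * g s)" for y
    unfolding \<Psi>_def shifted_set_integral_diff by simp
  have "((\<lambda>y. (\<Psi> y - \<Psi> t) / (y - t)) \<longlongrightarrow> (LINT s:A|\<nu>. f (s - t) * g s)) (at t)"
    unfolding quotient tendsto_at_iff_sequentially comp_def
    using difference_quotient_set_integral_tendsto[OF assms] by simp
  then show ?thesis
    unfolding \<Psi>_def[symmetric] by (simp add: has_field_derivative_iff)
qed

end

section \<open>Pathwise regularity of \<open>\<Xi>\<close>\<close>

locale cdgarch_path =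
  mu: delay_density p fm + nu: delay_density q fn
  for p fm q fn +
  fixes r :: real and x Sp :: "real \<Rightarrow> real"
  assumes p_le_r: "p \<le> r" and q_le_r: "q \<le> r"
    and cadlag_x: "cadlag_from (-r) x" and cadlag_S: "cadlag_from (-r) Sp"
begin

definition Xi_path :: "real \<Rightarrow> real" where
  "Xi_path t = (LINT s:{-p..t}|lborel. Fker p fm t s * x s)
     + (LINT s:{-q<..t}|LS_measure (-r) Sp. Fker q fn t s * left_lim x s)"

definition xi_path :: "real \<Rightarrow> real" where
  "xi_path t = (LINT u:{-p..0}|lborel. fm u * x (t + u))
     + (LINT u:{-q<..0}|LS_measure (-r - t) (\<lambda>u. Sp (t + u)). fn u * left_lim x (t + u))"

abbreviation dS :: "real measure" where
  "dS \<equiv> LS_measure (-r) Sp"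

definition x_ext :: "real \<Rightarrow> real" where
  "x_ext s = x (max s (-r))"

definition x_left_ext :: "real \<Rightarrow> real" where
  "x_left_ext s = (if -r < s then left_lim x s else 0)"

definition Psi_mu :: "real \<Rightarrow> real \<Rightarrow> real" where
  "Psi_mu T t = (LINT s:{-p..T}|lborel. (mu.cumulative s - mu.cumulative (s - t)) * x_ext s)"

definition Psi_nu :: "real \<Rightarrow> real \<Rightarrow> real" where
  "Psi_nu T t = (LINT s:{-q<..T}|dS. (nu.cumulative s - nu.cumulative (s - t)) * x_left_ext s)"

lemma sets_dS: "sets dS = sets borel"
  by (simp add: LS_measure_def)

lemma S_frozen_continuous_at_right: "continuous (at_right a) (\<lambda>\<tau>. Sp (max \<tau> (-r)))"
  by (rule cadlag_from_frozen_continuous_at_right[OF cadlag_S])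

lemma emeasure_dS_Ioc_finite: "emeasure dS {a<..b} < \<infinity>"
  unfolding LS_measure_def using S_frozen_continuous_at_right by (rule emeasure_interval_measure_Ioc_finite)

lemma x_ext_measurable: "x_ext \<in> borel_measurable borel"
  unfolding x_ext_def
  by (rule borel_measurable_continuous_at_right[OF cadlag_from_frozen_continuous_at_right[OF cadlag_x]])

lemma x_left_ext_measurable: "x_left_ext \<in> borel_measurable borel"
  unfolding x_left_ext_def by (rule borel_measurable_left_lim[OF cadlag_x])

lemma paths_bounded: "\<exists>C\<ge>0. (\<forall>s\<in>{-p..T}. \<bar>x_ext s\<bar> \<le> C) \<and> (\<forall>s\<in>{-q<..T}. \<bar>x_left_ext s\<bar> \<le> C)"
proof -
  obtain C where C: "\<forall>s\<in>{-r..T}. \<bar>x s\<bar> \<le> C" using cadlag_from_bounded[OF cadlag_x] by blast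
  have "\<bar>x_ext s\<bar> \<le> C" if "s \<in> {-p..T}" for s
    using that p_le_r C unfolding x_ext_def by (simp add: max_def)
  then have "\<bar>x_ext s\<bar> \<le> max C 0" if "s \<in> {-p..T}" for s
    using that by (meson max.coboundedI1)
  moreover have "\<bar>x_left_ext s\<bar> \<le> max C 0" if "s \<in> {-q<..T}" for s
    using that q_le_r left_lim_abs_le[OF cadlag_x C, of s] unfolding x_left_ext_def by auto
  ultimately show ?thesis by (intro exI[of _ "max C 0"]) force
qed

lemma Xi_path_eq_Psi:
  assumes t: "0 \<le> t" "t \<le> T"
  shows "Xi_path t = Psi_mu T t + Psi_nu T t"
proof -
  have "(LINT s:{-p..t}|lborel. Fker p fm t s * x s) = Psi_mu T t"
    unfolding Psi_mu_def set_lebesgue_integral_def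
  proof (rule Bochner_Integration.integral_cong[OF refl])
    fix s
    show "indicator {-p..t} s *\<^sub>R (Fker p fm t s * x s)
        = indicator {-p..T} s *\<^sub>R ((mu.cumulative s - mu.cumulative (s - t)) * x_ext s)"
    proof (cases "s \<in> {-p..t}")
      case True
      then have "x_ext s = x s" using p_le_r unfolding x_ext_def by (simp add: max_absorb1)
      then show ?thesis using True t mu.Fker_eq_cumulative_diff[of t s] by simp
    next
      case False
      then have "s \<notin> {-p..T} \<or> t < s" by auto
      then show ?thesis
        using False t mu.cumulative_eq_cumulative_0[of s] mu.cumulative_eq_cumulative_0[of "s - t"]
        by (auto simp: indicator_def)
    qed
  qed
  moreover have "(LINT s:{-q<..t}|dS. Fker q fn t s * left_lim x s) = Psi_nu T t"
    unfolding Psi_nu_def set_lebesgue_integral_def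
  proof (rule Bochner_Integration.integral_cong[OF refl])
    fix s
    show "indicator {-q<..t} s *\<^sub>R (Fker q fn t s * left_lim x s)
        = indicator {-q<..T} s *\<^sub>R ((nu.cumulative s - nu.cumulative (s - t)) * x_left_ext s)"
    proof (cases "s \<in> {-q<..t}")
      case True
      then have "x_left_ext s = left_lim x s" using q_le_r unfolding x_left_ext_def by simp
      then show ?thesis using True t nu.Fker_eq_cumulative_diff[of t s] by simp
    next
      case False
      then have "s \<notin> {-q<..T} \<or> t < s" by auto
      then show ?thesis
        using False t nu.cumulative_eq_cumulative_0[of s] nu.cumulative_eq_cumulative_0[of "s - t"]
        by (auto simp: indicator_def)
    qed
  qed
  ultimately show ?thesis unfolding Xi_path_def by simp
qed

lemma Xi_path_lipschitz: "\<exists>C. C-lipschitz_on {0..T} Xi_path"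
proof -
  obtain C where C: "C \<ge> 0" "\<forall>s\<in>{-p..T}. \<bar>x_ext s\<bar> \<le> C" "\<forall>s\<in>{-q<..T}. \<bar>x_left_ext s\<bar> \<le> C"
    using paths_bounded by blast
  obtain Bm Bn where Bm: "Bm-lipschitz_on UNIV mu.cumulative" and Bn: "Bn-lipschitz_on UNIV nu.cumulative"
    using mu.lipschitz_on_cumulative nu.lipschitz_on_cumulative by blast
  define Km Kn where "Km = Bm * C * measure lborel {-p..T}" and "Kn = Bn * C * measure dS {-q<..T}"
  have Km: "\<bar>Psi_mu T \<tau> - Psi_mu T \<tau>'\<bar> \<le> Km * \<bar>\<tau> - \<tau>'\<bar>" for \<tau> \<tau>'
    unfolding Psi_mu_def Km_def
    by (rule lipschitz_shifted_set_integral[OF _ _ _ x_ext_measurable _ Bm])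
      (use C in \<open>auto simp: emeasure_lborel_Icc_eq\<close>)
  have Kn: "\<bar>Psi_nu T \<tau> - Psi_nu T \<tau>'\<bar> \<le> Kn * \<bar>\<tau> - \<tau>'\<bar>" for \<tau> \<tau>'
    unfolding Psi_nu_def Kn_def
    by (rule lipschitz_shifted_set_integral[OF sets_dS _ _ x_left_ext_measurable _ Bn])
      (use C emeasure_dS_Ioc_finite in auto)
  show ?thesis
  proof (intro exI lipschitz_onI)
    show "0 \<le> Km + Kn"
      unfolding Km_def Kn_def using C lipschitz_on_nonneg[OF Bm] lipschitz_on_nonneg[OF Bn] by simp
    fix a b assume "a \<in> {0..T}" "b \<in> {0..T}"
    then have "dist (Xi_path a) (Xi_path b) = \<bar>(Psi_mu T a - Psi_mu T b) + (Psi_nu T a - Psi_nu T b)\<bar>"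
      using Xi_path_eq_Psi[of a T] Xi_path_eq_Psi[of b T] by (simp add: dist_real_def algebra_simps)
    also have "\<dots> \<le> Km * \<bar>a - b\<bar> + Kn * \<bar>a - b\<bar>"
      using Km[of a b] Kn[of a b] by linarith
    finally show "dist (Xi_path a) (Xi_path b) \<le> (Km + Kn) * dist a b"
      by (simp add: dist_real_def distrib_right)
  qed
qed

lemma xi_mu_shift:
  assumes "0 \<le> t" "t \<le> T"
  shows "(LINT u:{-p..0}|lborel. fm u * x (t + u)) = (LINT s:{-p..T}|lborel. fm (s - t) * x_ext s)"
proof -
  have "(LINT s:{-p..T}|lborel. fm (s - t) * x_ext s)
      = (\<integral>s. indicator {-p..T} s * (fm (s - t) * x_ext s) \<partial>lborel)"
    by (simp add: set_lebesgue_integral_def)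
  also have "\<dots> = \<bar>1\<bar> *\<^sub>R (\<integral>u. indicator {-p..T} (t + 1 * u) * (fm (t + 1 * u - t) * x_ext (t + 1 * u)) \<partial>lborel)"
    by (rule lborel_integral_real_affine) simp
  also have "\<dots> = (LINT u:{-p..0}|lborel. fm u * x (t + u))"
    unfolding set_lebesgue_integral_def
  proof (simp, rule Bochner_Integration.integral_cong[OF refl])
    fix u
    show "indicator {-p..T} (t + u) * (fm u * x_ext (t + u)) = indicator {-p..0} u * (fm u * x (t + u))"
    proof (cases "u \<in> {-p..0}")
      case True
      then have "t + u \<in> {-p..T}" "max (t + u) (-r) = t + u" using assms p_le_r by auto
      then show ?thesis using True unfolding x_ext_def by simp
    qed (use mu.density_zero_outside in simp)
  qed
  finally show ?thesis by simp
qed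

lemma LS_measure_shift: "LS_measure (-r - t) (\<lambda>u. Sp (t + u)) = distr dS borel (\<lambda>s. s - t)"
proof -
  have "LS_measure (-r - t) (\<lambda>u. Sp (t + u)) = interval_measure (\<lambda>u. Sp (max (t + u) (-r)))"
    unfolding LS_measure_def by (rule arg_cong[where f=interval_measure]) (auto simp: max_def)
  also have "\<dots> = distr dS borel (\<lambda>s. s - t)"
    unfolding LS_measure_def using S_frozen_continuous_at_right by (rule interval_measure_shift)
  finally show ?thesis .
qed

lemma xi_nu_shift:
  assumes t: "0 \<le> t" "t \<le> T" and no_atom: "emeasure dS {t - q} = 0"
  shows "(LINT u:{-q<..0}|LS_measure (-r - t) (\<lambda>u. Sp (t + u)). fn u * left_lim x (t + u))
       = (LINT s:{-q<..T}|dS. fn (s - t) * x_left_ext s)"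
proof -
  note x_left_ext_measurable[measurable] nu.density_borel_measurable[measurable]
  define h where "h u = indicator {-q<..0} u * (fn u * x_left_ext (t + u))" for u
  have h_measurable[measurable]: "h \<in> borel_measurable borel"
    unfolding h_def by measurable
  have "(LINT u:{-q<..0}|LS_measure (-r - t) (\<lambda>u. Sp (t + u)). fn u * left_lim x (t + u))
      = (\<integral>u. h u \<partial>distr dS borel (\<lambda>s. s - t))"
    unfolding LS_measure_shift set_lebesgue_integral_def
  proof (rule Bochner_Integration.integral_cong[OF refl])
    fix u
    show "indicator {-q<..0} u *\<^sub>R (fn u * left_lim x (t + u)) = h u"
    proof (cases "u \<in> {-q<..0}")
      case True
      then have "-r < t + u" using t q_le_r by auto
      then show ?thesis using True unfolding h_def x_left_ext_def by simp
    qed (simp add: h_def)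
  qed
  also have "\<dots> = (\<integral>s. h (s - t) \<partial>dS)"
    by (rule integral_distr[OF measurable_sets_borel[OF sets_dS]]) simp_all
  also have "\<dots> = (LINT s:{-q<..T}|dS. fn (s - t) * x_left_ext s)"
    unfolding set_lebesgue_integral_def
  proof (rule integral_cong_AE)
    show "(\<lambda>s. h (s - t)) \<in> borel_measurable dS"
      by (rule measurable_sets_borel[OF sets_dS]) measurable
    show "(\<lambda>s. indicator {-q<..T} s *\<^sub>R (fn (s - t) * x_left_ext s)) \<in> borel_measurable dS"
      by (rule measurable_sets_borel[OF sets_dS]) measurable
    have "AE s in dS. s \<notin> {t - q}"
      by (rule AE_not_in) (simp add: null_sets_def sets_dS no_atom)
    then show "AE s in dS. h (s - t) = indicator {-q<..T} s *\<^sub>R (fn (s - t) * x_left_ext s)"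
    proof eventually_elim
      case (elim s)
      show ?case
      proof (cases "s - t \<in> {-q<..0}")
        case True
        then have "s \<in> {-q<..T}" using t by auto
        then show ?thesis using True by (simp add: h_def)
      next
        case False
        then have "s - t \<notin> {-q..0}" using elim by auto
        then show ?thesis using False nu.density_zero_outside by (simp add: h_def)
      qed
    qed
  qed
  finally show ?thesis .
qed

lemma Xi_path_has_derivative:
  assumes t: "0 \<le> t" and no_atoms: "emeasure dS {t} = 0" "emeasure dS {t - q} = 0"
  shows "(Xi_path has_real_derivative xi_path t) (at t within {0..})"
proof -
  define T where "T = t + 1"
  obtain C where C: "\<forall>s\<in>{-p..T}. \<bar>x_ext s\<bar> \<le> C" "\<forall>s\<in>{-q<..T}. \<bar>x_left_ext s\<bar> \<le> C"
    using paths_bounded by blast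
  obtain Bm Bn where Bm: "Bm-lipschitz_on UNIV mu.cumulative" and Bn: "Bn-lipschitz_on UNIV nu.cumulative"
    using mu.lipschitz_on_cumulative nu.lipschitz_on_cumulative by blast
  have "AE s in lborel. s \<in> {-p..T} \<longrightarrow> (mu.cumulative has_real_derivative fm (s - t)) (at (s - t))"
    using AE_lborel_singleton[of t] AE_lborel_singleton[of "t - p"]
    by eventually_elim (auto intro: mu.cumulative_has_derivative)
  then have d_mu: "(Psi_mu T has_real_derivative (LINT s:{-p..T}|lborel. fm (s - t) * x_ext s)) (at t)"
    unfolding Psi_mu_def[abs_def]
    by (intro shifted_set_integral_has_derivative[OF _ _ _ x_ext_measurable _ Bm mu.density_borel_measurable])
      (use C in \<open>auto simp: emeasure_lborel_Icc_eq\<close>)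
  have "AE s in dS. s \<noteq> t \<and> s \<noteq> t - q"
    using AE_not_in[of "{t}" dS] AE_not_in[of "{t - q}" dS] no_atoms sets_dS
    by (auto simp: null_sets_def)
  then have "AE s in dS. s \<in> {-q<..T} \<longrightarrow> (nu.cumulative has_real_derivative fn (s - t)) (at (s - t))"
    by eventually_elim (auto intro: nu.cumulative_has_derivative)
  then have d_nu: "(Psi_nu T has_real_derivative (LINT s:{-q<..T}|dS. fn (s - t) * x_left_ext s)) (at t)"
    unfolding Psi_nu_def[abs_def]
    by (intro shifted_set_integral_has_derivative[OF sets_dS _ _ x_left_ext_measurable _ Bn nu.density_borel_measurable])
      (use C emeasure_dS_Ioc_finite in auto)
  have "xi_path t = (LINT s:{-p..T}|lborel. fm (s - t) * x_ext s) + (LINT s:{-q<..T}|dS. fn (s - t) * x_left_ext s)"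
    using xi_mu_shift[OF t, of T] xi_nu_shift[OF t _ no_atoms(2), of T] unfolding xi_path_def T_def by simp
  then have "((\<lambda>\<tau>. Psi_mu T \<tau> + Psi_nu T \<tau>) has_real_derivative xi_path t) (at t within {0..})"
    using has_field_derivative_at_within[OF DERIV_add[OF d_mu d_nu]] by simp
  then show ?thesis
  proof (rule has_field_derivative_transform_within[OF _ zero_less_one])
    show "t \<in> {0..}" using t by simp
    show "Psi_mu T y + Psi_nu T y = Xi_path y" if "y \<in> {0..}" "dist y t < 1" for y
      using that Xi_path_eq_Psi[of y T] unfolding T_def by (simp add: dist_real_def)
  qed
qed

lemma AE_Xi_path_has_derivative:
  "AE t in lborel. 0 \<le> t \<longrightarrow> (Xi_path has_real_derivative xi_path t) (at t within {0..})"
proof -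
  define atoms where "atoms = {s. emeasure dS {s} \<noteq> 0}"
  have "countable atoms"
    unfolding atoms_def by (rule countable_atoms_Ioc_finite[OF sets_dS emeasure_dS_Ioc_finite])
  then have "countable (atoms \<union> (\<lambda>s. s + q) ` atoms)" by simp
  then have "AE t in lborel. t \<notin> atoms \<union> (\<lambda>s. s + q) ` atoms"
    by (intro AE_not_in countable_imp_null_set_lborel)
  then show ?thesis
  proof eventually_elim
    case (elim t)
    then have "emeasure dS {t} = 0" "emeasure dS {t - q} = 0"
      unfolding atoms_def by (auto simp: image_iff)
    then show ?case using Xi_path_has_derivative by blast
  qed
qed

end

theorem proposition4p6:
  fixes M :: "'a measure" and F :: "real \<Rightarrow> 'a measure"
    and L S \<Phi> X :: "real \<Rightarrow> 'a \<Rightarrow> real"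
    and p q r \<eta> c\<mu> c\<nu> :: real and f\<mu> f\<nu> :: "real \<Rightarrow> real"
  assumes "prob_space M"
    and "p \<ge> 0" and "q \<ge> 0" and "r = max p q" and "r > 0"
    and "filtration_usual M r F"
    and "levy_process M r F L"
    and "quadratic_variation M r L S"
    and "integrable M (\<lambda>\<omega>. (L 1 \<omega>) ^ 4)"
    and "\<eta> > 0" and "c\<mu> > 0" and "c\<nu> > 0"
    and "\<forall>u\<in>{-p..0}. f\<mu> u \<ge> 0" and "continuous_on {-p..0} f\<mu>" and "\<forall>u. u \<notin> {-p..0} \<longrightarrow> f\<mu> u = 0"
    and "\<forall>u\<in>{-q..0}. f\<nu> u \<ge> 0" and "continuous_on {-q..0} f\<nu>" and "\<forall>u. u \<notin> {-q..0} \<longrightarrow> f\<nu> u = 0"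
    and "initial_process M r L \<Phi>"
    and "cdgarch_strong_solution M F p q r \<eta> c\<mu> c\<nu> f\<mu> f\<nu> S \<Phi> X"
  shows "(\<forall>t s. Fker p f\<mu> t s \<ge> 0) \<and> (\<exists>C. C-lipschitz_on UNIV (\<lambda>(t, s). Fker p f\<mu> t s))
       \<and> (\<forall>t s. Fker q f\<nu> t s \<ge> 0) \<and> (\<exists>C. C-lipschitz_on UNIV (\<lambda>(t, s). Fker q f\<nu> t s))
       \<and> (AE \<omega> in M.
            (\<forall>T\<ge>0. \<exists>C. C-lipschitz_on {0..T} (\<lambda>t. Xi p q r f\<mu> f\<nu> S X t \<omega>))
          \<and> (AE t in lborel. t \<ge> 0 \<longrightarrow>
               ((\<lambda>t'. Xi p q r f\<mu> f\<nu> S X t' \<omega>) has_real_derivative xi p q r f\<mu> f\<nu> S X t \<omega>)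
                 (at t within {0..})))"
proof -
  \<comment> \<open>The statement is pathwise: of the probabilistic hypotheses only the cadlag paths of
    \<open>X\<close> and \<open>S\<close> are used.\<close>
  interpret mu: delay_density p f\<mu> by unfold_locales (use assms in auto)
  interpret nu: delay_density q f\<nu> by unfold_locales (use assms in auto)
  have path: "cdgarch_path p f\<mu> q f\<nu> r (\<lambda>t. X t \<omega>) (\<lambda>t. S t \<omega>)" if "\<omega> \<in> space M" for \<omega>
    by unfold_locales
      (use that assms in \<open>auto simp: quadratic_variation_def cdgarch_strong_solution_def\<close>)
  have "AE \<omega> in M.
            (\<forall>T\<ge>0. \<exists>C. C-lipschitz_on {0..T} (\<lambda>t. Xi p q r f\<mu> f\<nu> S X t \<omega>))
          \<and> (AE t in lborel. t \<ge> 0 \<longrightarrow>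
               ((\<lambda>t'. Xi p q r f\<mu> f\<nu> S X t' \<omega>) has_real_derivative xi p q r f\<mu> f\<nu> S X t \<omega>)
                 (at t within {0..}))"
  proof (rule AE_I2)
    fix \<omega> assume "\<omega> \<in> space M"
    interpret path: cdgarch_path p f\<mu> q f\<nu> r "\<lambda>t. X t \<omega>" "\<lambda>t. S t \<omega>"
      using path \<open>\<omega> \<in> space M\<close> .
    have "(\<lambda>t. Xi p q r f\<mu> f\<nu> S X t \<omega>) = path.Xi_path" "(\<lambda>t. xi p q r f\<mu> f\<nu> S X t \<omega>) = path.xi_path"
      by (simp_all add: fun_eq_iff Xi_def xi_def path.Xi_path_def path.xi_path_def)
    then show "(\<forall>T\<ge>0. \<exists>C. C-lipschitz_on {0..T} (\<lambda>t. Xi p q r f\<mu> f\<nu> S X t \<omega>))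
          \<and> (AE t in lborel. t \<ge> 0 \<longrightarrow>
               ((\<lambda>t'. Xi p q r f\<mu> f\<nu> S X t' \<omega>) has_real_derivative xi p q r f\<mu> f\<nu> S X t \<omega>)
                 (at t within {0..}))"
      using path.Xi_path_lipschitz path.AE_Xi_path_has_derivative by (simp add: fun_eq_iff)
  qed
  then show ?thesis
    using mu.Fker_nonneg mu.Fker_lipschitz nu.Fker_nonneg nu.Fker_lipschitz by blast
qed

end
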